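(* Assume (A1), (A2), (A3) (see context), and suppose $$\lim_{k\to+\infty}\big\|\mathbb P(\xi(\Lambda_{1/2})=0\mid\mathcal T_k)-\mathbb P(\xi(\Lambda_{1/2})=0)\big\|_\infty=0 .$$ Then there is $c>0$ with $\mathbb P(\xi(\Lambda_\ell)=0)\le e^{-c\ell^d}$ for all $\ell\ge1$. In particular $\mathbb P$ satisfies Condition $C(\alpha)$ for every $\alpha>0$.
   Context: $\Lambda_a=[-a,a]^d$. $\mathcal N$ = locally finite subsets of $\mathbb R^d$, identified with counting measures ($\xi(A)=\#(\xi\cap A)$), $\sigma$-algebra generated by $\xi\mapsto\xi(A)$; $\tau_x\xi:=\xi-x$. $\mathrm{DT}(\xi)$: graph on $\xi$ whose edges are pairs of points with Voronoi cells sharing a $(d-1)$-dimensional face. $\mathcal T_a$ is the $\sigma$-algebra on $\mathcal N$ of events determined by $\xi\cap\Lambda_a^c$; $\|\cdot\|_\infty$ is the $L^\infty(\mathbb P)$ norm. Setting: $(\Omega,\mathcal F,\mathcal P)$ with measurable $\mathbb R^d$-action $(\theta_x)$; simple point process $\omega\mapsto\hat\omega$ with law $\mathbb P$; measurable symmetric conductances $c_{x,y}(\omega)\ge0$ vanishing off edges of $\mathrm{DT}(\hat\omega)$. (A1) $\mathcal P$ $\theta$-invariant, $\mathcal P(\hat\omega=\emptyset)=0$; (A2) $m:=\mathbb E[\xi([0,1]^d)]\in(0,\infty)$; (A3) on a $\theta$-invariant measurable full-measure set, $\widehat{\theta_x\omega}=\tau_x\hat\omega$ and $c_{y-x,z-x}(\theta_x\omega)=c_{y,z}(\omega)$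 for all $x$ and edges $\{y,z\}$. Condition $C(\alpha)$: $\exists\kappa>0$ with $\mathbb P(\xi(\Lambda_\ell)=0)\le\kappa\ell^{-\alpha}$ for all $\ell\ge1$. *)

theory Defs
  imports "HOL-Analysis.Analysis" "HOL-Probability.Probability"
begin

text \<open>Points of R^d are vectors of type real^'d, d = CARD('d).\<close>

definition cube :: "real \<Rightarrow> (real^'d) set"
  where "cube a = {x. \<forall>i. \<bar>x $ i\<bar> \<le> a}"

definition unit_cube :: "(real^'d) set"
  where "unit_cube = {x. \<forall>i. 0 \<le> x $ i \<and> x $ i \<le> 1}"

definition locfin :: "(real^'d) set \<Rightarrow> bool"
  where "locfin \<xi> \<longleftrightarrow> (\<forall>K. bounded K \<longrightarrow> finite (\<xi> \<inter> K))"

definition cnt :: "(real^'d) set \<Rightarrow> (real^'d) set \<Rightarrow> enat"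
  where "cnt \<xi> A = (if finite (\<xi> \<inter> A) then enat (card (\<xi> \<inter> A)) else \<infinity>)"

definition Nsp :: "(real^'d) set measure"
  where "Nsp = sigma {\<xi>. locfin \<xi>}
     {{\<xi>. locfin \<xi> \<and> cnt \<xi> A = n} | A n. A \<in> sets borel}"

text \<open>T_a: events determined by xi restricted to the complement of Lambda_a
  (as a measure on Nsp with the sub-sigma-algebra).\<close>
definition Tail :: "real \<Rightarrow> (real^'d) set measure"
  where "Tail a = sigma {\<xi>. locfin \<xi>}
     {{\<xi>. locfin \<xi> \<and> cnt \<xi> A = n} | A n. A \<in> sets borel \<and> A \<subseteq> - cube a}"

definition voronoi :: "(real^'d) set \<Rightarrow> real^'d \<Rightarrow> (real^'d) set"
  where "voronoi \<xi> x = {z. \<forall>y\<in>\<xi>. dist z x \<le> dist z y}"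

definition DT_edge :: "(real^'d) set \<Rightarrow> real^'d \<Rightarrow> real^'d \<Rightarrow> bool"
  where "DT_edge \<xi> x y \<longleftrightarrow> x \<in> \<xi> \<and> y \<in> \<xi> \<and> x \<noteq> y \<and>
     aff_dim (voronoi \<xi> x \<inter> voronoi \<xi> y) = int CARD('d) - 1"

definition Linf_norm :: "'a measure \<Rightarrow> ('a \<Rightarrow> real) \<Rightarrow> ereal"
  where "Linf_norm M f = esssup M (\<lambda>x. ereal \<bar>f x\<bar>)"

end

theory Submission
  imports Defs
begin

text \<open>Let \<open>p\<close> be the probability that \<open>cube (1/2)\<close> contains no point. By stationarity
  this is also the probability that the unit cube is empty, so positive intensity forces
  \<open>p < 1\<close>. The mixing hypothesis yields a \<open>k\<close> such that, conditionally on any event determined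
  outside \<open>cube k\<close>, the probability that \<open>cube (1/2)\<close> is empty is at most \<open>q = (1 + p) / 2 < 1\<close>.
  Inside \<open>cube l\<close> place a grid of at least \<open>(l / (2 (k + 1)))\<^sup>d\<close> unit cubes whose centres are
  at sup-distance at least \<open>k + 1\<close> from each other. After translating one centre to the origin
  all other cubes lie outside \<open>cube k\<close>, so peeling off the cubes one at a time shows that all of
  them are empty with probability at most \<open>q\<close> to the power of their number, i.e. at most
  \<open>exp (- c l\<^sup>d)\<close>. Polynomial decay of every order follows.\<close>

section \<open>Cubes and translated configurations\<close>

definition cube_at :: "real^'d \<Rightarrow> real \<Rightarrow> (real^'d) set"
  where "cube_at y r = {z. \<forall>i. \<bar>z $ i - y $ i\<bar> \<le> r}"

definition shift_config :: "real^'d \<Rightarrow> (real^'d) set \<Rightarrow> (real^'d) set"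
  where "shift_config x \<xi> = (\<lambda>z. z - x) ` \<xi>"

lemma cube_eq_cube_at: "cube r = cube_at 0 r"
  by (simp add: cube_def cube_at_def)

lemma unit_cube_eq_cube_at: "unit_cube = cube_at (\<chi> i. 1/2) (1/2)"
proof -
  have "0 \<le> t \<and> t \<le> 1 \<longleftrightarrow> \<bar>t - 1/2\<bar> \<le> 1/2" for t :: real
    by (auto simp: abs_if)
  then show ?thesis
    unfolding unit_cube_def cube_at_def by (simp only: vec_lambda_beta)
qed

lemma translation_cube_at: "(\<lambda>w. w + x) ` cube_at y r = cube_at (y + x) r"
  by (force simp: cube_at_def image_iff algebra_simps intro: exI[of _ "_ - x"])

lemma closed_cube_at: "closed (cube_at y r)"
  unfolding cube_at_def by (intro closed_Collect_all allI closed_Collect_le continuous_intros)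

lemma cnt_eq_0_iff: "cnt \<xi> A = 0 \<longleftrightarrow> \<xi> \<inter> A = {}"
  by (auto simp: cnt_def zero_enat_def)

lemma shift_config_Int: "shift_config x \<xi> \<inter> A = (\<lambda>z. z - x) ` (\<xi> \<inter> (\<lambda>z. z + x) ` A)"
  unfolding shift_config_def by (force simp: image_iff)

lemma cnt_shift_config: "cnt (shift_config x \<xi>) A = cnt \<xi> ((\<lambda>z. z + x) ` A)"
proof -
  have inj: "inj_on (\<lambda>z. z - x) S" for S by (auto simp: inj_on_def)
  show ?thesis
    unfolding cnt_def shift_config_Int using finite_image_iff[OF inj] card_image[OF inj] by simp
qed

lemma locfin_shift_config: "locfin \<xi> \<Longrightarrow> locfin (shift_config x \<xi>)"
  unfolding locfin_def shift_config_Int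
  using bounded_translation[of _ x] by (simp add: add.commute)

lemma space_Nsp: "space Nsp = {\<xi>. locfin \<xi>}"
  unfolding Nsp_def by (rule space_measure_of) auto

lemma space_Tail: "space (Tail a) = {\<xi>. locfin \<xi>}"
  unfolding Tail_def by (rule space_measure_of) auto

lemma cnt_eq_in_sets_Nsp: "A \<in> sets borel \<Longrightarrow> {\<xi>. locfin \<xi> \<and> cnt \<xi> A = n} \<in> sets Nsp"
  unfolding Nsp_def by (subst sets_measure_of) auto

lemma cnt_eq_in_sets_Tail:
  "A \<in> sets borel \<Longrightarrow> A \<subseteq> - cube a \<Longrightarrow> {\<xi>. locfin \<xi> \<and> cnt \<xi> A = n} \<in> sets (Tail a)"
  unfolding Tail_def by (subst sets_measure_of) auto

lemma subalgebra_Nsp_Tail: "subalgebra Nsp (Tail a)"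
proof -
  have "sets (Tail a) = sigma_sets {\<xi>. locfin \<xi>}
      {{\<xi>. locfin \<xi> \<and> cnt \<xi> A = n} | A n. A \<in> sets borel \<and> A \<subseteq> - cube a}"
    unfolding Tail_def by (rule sets_measure_of) auto
  also have "\<dots> \<subseteq> sets Nsp"
    by (rule sets.sigma_sets_subset')
      (use sets.top[of Nsp] in \<open>auto simp: space_Nsp intro: cnt_eq_in_sets_Nsp\<close>)
  finally show ?thesis
    unfolding subalgebra_def by (simp add: space_Nsp space_Tail)
qed

lemma translation_in_sets_borel:
  "A \<in> sets borel \<Longrightarrow> (\<lambda>z. z + x) ` A \<in> sets (borel :: 'a::real_normed_vector measure)"
proof -
  assume "A \<in> sets borel"
  have "(\<lambda>z. z + x) ` A = (\<lambda>z. z - x) -` A \<inter> space borel"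
    by (force simp: image_iff)
  also have "\<dots> \<in> sets borel"
    by (intro measurable_sets[OF _ \<open>A \<in> sets borel\<close>] borel_measurable_continuous_onI
        continuous_intros)
  finally show ?thesis .
qed

lemma measurable_shift_config: "shift_config (x::real^'d) \<in> Nsp \<rightarrow>\<^sub>M Nsp"
proof -
  have "shift_config x \<in> Nsp \<rightarrow>\<^sub>M
      sigma {\<xi>::(real^'d) set. locfin \<xi>} {{\<xi>. locfin \<xi> \<and> cnt \<xi> A = n} | A n. A \<in> sets borel}"
  proof (rule measurable_measure_of)
    fix B :: "(real^'d) set set"
    assume "B \<in> {{\<xi>. locfin \<xi> \<and> cnt \<xi> A = n} | A n. A \<in> sets borel}"
    then obtain A n where A: "A \<in> sets borel" and B: "B = {\<xi>. locfin \<xi> \<and> cnt \<xi> A = n}"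
      by auto
    have "shift_config x -` B \<inter> space Nsp = {\<xi>. locfin \<xi> \<and> cnt \<xi> ((\<lambda>z. z + x) ` A) = n}"
      using B by (auto simp: space_Nsp cnt_shift_config locfin_shift_config)
    then show "shift_config x -` B \<inter> space Nsp \<in> sets Nsp"
      using cnt_eq_in_sets_Nsp[OF translation_in_sets_borel[OF A]] by simp
  qed (auto simp: space_Nsp locfin_shift_config)
  then show ?thesis
    by (simp only: Nsp_def[symmetric])
qed

section \<open>Void events\<close>

definition void_event :: "(real^'d) set \<Rightarrow> (real^'d) set set"
  where "void_event S = {\<xi>. locfin \<xi> \<and> (\<forall>y\<in>S. \<xi> \<inter> cube_at y (1/2) = {})}"

lemma void_event_insert: "void_event (insert y S) = void_event {y} \<inter> void_event S"
  by (auto simp: void_event_def)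

lemma void_event_singleton: "void_event {y} = {\<xi>. locfin \<xi> \<and> cnt \<xi> (cube_at y (1/2)) = 0}"
  by (simp add: void_event_def cnt_eq_0_iff)

lemma void_event_in_sets:
  assumes "space M = {\<xi>. locfin \<xi>}" and "\<And>y. y \<in> S \<Longrightarrow> void_event {y} \<in> sets M"
    and "finite S"
  shows "void_event S \<in> sets M"
  using assms(3,2)
proof (induction S rule: finite_induct)
  case empty
  then show ?case
    using sets.top[of M] by (simp add: void_event_def assms(1))
next
  case (insert y S)
  then show ?case
    by (subst void_event_insert) auto
qed

lemma void_event_in_sets_Nsp: "finite S \<Longrightarrow> void_event S \<in> sets Nsp"
  by (rule void_event_in_sets[OF space_Nsp])
    (simp add: void_event_singleton cnt_eq_in_sets_Nsp borel_closed closed_cube_at)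

lemma cube_at_subset_outside_cube:
  assumes "a + 1 \<le> \<bar>t $ i\<bar>"
  shows "cube_at t (1/2) \<subseteq> - cube a"
proof
  fix x assume "x \<in> cube_at t (1/2)"
  then have "\<bar>x $ i - t $ i\<bar> \<le> 1/2"
    by (auto simp: cube_at_def)
  then have "a < \<bar>x $ i\<bar>"
    using assms by linarith
  then show "x \<in> - cube a"
    by (auto simp: cube_def not_le)
qed

lemma void_event_in_sets_Tail:
  assumes "finite T" and "\<And>t. t \<in> T \<Longrightarrow> \<exists>i. a + 1 \<le> \<bar>t $ i\<bar>"
  shows "void_event T \<in> sets (Tail a)"
proof (rule void_event_in_sets[OF space_Tail _ assms(1)])
  fix t assume "t \<in> T"
  then obtain i where "a + 1 \<le> \<bar>t $ i\<bar>"
    using assms(2) by blast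
  then show "void_event {t} \<in> sets (Tail a)"
    unfolding void_event_singleton
    by (intro cnt_eq_in_sets_Tail cube_at_subset_outside_cube borel_closed closed_cube_at)
qed

lemma vimage_shift_config_void_event:
  "shift_config y -` void_event T \<inter> space Nsp = void_event ((\<lambda>z. z + y) ` T)"
proof -
  have "shift_config y \<xi> \<inter> cube_at t (1/2) = {} \<longleftrightarrow> \<xi> \<inter> cube_at (t + y) (1/2) = {}" for \<xi> t
    by (simp add: shift_config_Int translation_cube_at)
  then show ?thesis
    by (auto simp: void_event_def space_Nsp locfin_shift_config)
qed

section \<open>A separated grid in a cube\<close>

definition sup_separated :: "real \<Rightarrow> (real^'d) set \<Rightarrow> bool"
  where "sup_separated r S \<longleftrightarrow> (\<forall>y\<in>S. \<forall>y'\<in>S. y \<noteq> y' \<longrightarrow> (\<exists>i. r \<le> \<bar>y $ i - y' $ i\<bar>))"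

lemma sup_separated_subset: "sup_separated r S \<Longrightarrow> T \<subseteq> S \<Longrightarrow> sup_separated r T"
  by (auto simp: sup_separated_def)

definition grid :: "real \<Rightarrow> nat \<Rightarrow> (real^'d) set"
  where "grid s m = {y. \<forall>i. y $ i \<in> (\<lambda>j. s * real j) ` {0..m}}"

lemma bij_betw_vec_lambda_PiE: "bij_betw vec_lambda (UNIV \<rightarrow>\<^sub>E T) {y. \<forall>i. y $ i \<in> T}"
proof (rule bij_betwI')
  show "\<And>y. y \<in> {y. \<forall>i. y $ i \<in> T} \<Longrightarrow> \<exists>f\<in>UNIV \<rightarrow>\<^sub>E T. y = vec_lambda f"
    by (rule_tac x="vec_nth y" in bexI) auto
qed (auto simp: vec_lambda_inject)

lemma bij_betw_grid:
  "bij_betw vec_lambda (UNIV \<rightarrow>\<^sub>E (\<lambda>j. s * real j) ` {0..m}) (grid s m :: (real^'d) set)"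
  unfolding grid_def by (rule bij_betw_vec_lambda_PiE)

lemma finite_grid: "finite (grid s m :: (real^'d) set)"
  using bij_betw_finite[OF bij_betw_grid] by (simp add: finite_PiE)

lemma card_grid:
  assumes "0 < s"
  shows "card (grid s m :: (real^'d) set) = (m + 1) ^ CARD('d)"
proof -
  have "card ((\<lambda>j. s * real j) ` {0..m}) = m + 1"
    using assms by (subst card_image) (auto simp: inj_on_def)
  moreover have "bij_betw vec_lambda (UNIV \<rightarrow>\<^sub>E (\<lambda>j. s * real j) ` {0..m}) (grid s m :: (real^'d) set)"
    by (rule bij_betw_grid)
  ultimately show ?thesis
    by (simp add: bij_betw_same_card[symmetric] card_PiE)
qed

lemma sup_separated_grid:
  assumes "0 < s"
  shows "sup_separated s (grid s m)"
  unfolding sup_separated_def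
proof (intro ballI impI)
  fix y y' assume "y \<in> grid s m" "y' \<in> grid s m" "y \<noteq> y'"
  then obtain i where "y $ i \<noteq> y' $ i"
    by (auto simp: vec_eq_iff)
  moreover obtain j :: nat where "y $ i = s * j"
    using \<open>y \<in> grid s m\<close> by (auto simp: grid_def)
  moreover obtain j' :: nat where "y' $ i = s * j'"
    using \<open>y' \<in> grid s m\<close> by (auto simp: grid_def)
  ultimately have "1 \<le> \<bar>real j - real j'\<bar>" "\<bar>y $ i - y' $ i\<bar> = s * \<bar>real j - real j'\<bar>"
    using assms by (auto simp: abs_mult right_diff_distrib[symmetric])
  moreover have "s * 1 \<le> s * \<bar>real j - real j'\<bar>"
    using calculation(1) assms by (intro mult_left_mono) auto
  ultimately show "\<exists>i. s \<le> \<bar>y $ i - y' $ i\<bar>"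
    by (intro exI[of _ i]) simp
qed

lemma cube_at_subset_cube_if_in_grid:
  assumes "y \<in> grid s m" "0 < s" "s * real m + 1/2 \<le> l"
  shows "cube_at y (1/2) \<subseteq> cube l"
proof
  fix z assume z: "z \<in> cube_at y (1/2)"
  have "\<bar>z $ i\<bar> \<le> l" for i
  proof -
    have "y $ i \<in> (\<lambda>j. s * real j) ` {0..m}"
      using assms(1) by (simp add: grid_def)
    then obtain j where "j \<le> m" "y $ i = s * real j"
      by auto
    then have "\<bar>y $ i\<bar> \<le> s * real m"
      using assms(2) by simp
    moreover have "\<bar>z $ i - y $ i\<bar> \<le> 1/2"
      using z by (simp add: cube_at_def)
    ultimately show ?thesis
      using assms(3) by linarith
  qed
  then show "z \<in> cube l"
    by (simp add: cube_def)
qed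

lemma exists_separated_points_in_cube:
  assumes "1 \<le> l" "0 < s"
  shows "\<exists>S::(real^'d) set. finite S \<and> sup_separated s S \<and> (\<forall>y\<in>S. cube_at y (1/2) \<subseteq> cube l)
    \<and> (l / (2 * s)) ^ CARD('d) \<le> real (card S)"
proof -
  define m where "m = nat \<lfloor>(l - 1/2) / s\<rfloor>"
  have "real m \<le> (l - 1/2) / s"
    using assms by (simp add: m_def)
  then have "s * real m + 1/2 \<le> l"
    using assms(2) by (simp add: field_simps)
  then have in_cube: "\<forall>y\<in>grid s m. cube_at y (1/2) \<subseteq> cube l"
    using cube_at_subset_cube_if_in_grid assms(2) by blast
  have "l / (2 * s) \<le> (l - 1/2) / s"
    using assms by (simp add: field_simps)
  also have "\<dots> \<le> real m + 1"
    using assms unfolding m_def by linarith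
  finally have "(l / (2 * s)) ^ CARD('d) \<le> (real m + 1) ^ CARD('d)"
    by (rule power_mono) (use assms in simp)
  then have "(l / (2 * s)) ^ CARD('d) \<le> real (card (grid s m :: (real^'d) set))"
    using assms(2) by (simp add: card_grid add.commute)
  then show ?thesis
    using in_cube finite_grid sup_separated_grid[OF assms(2)] by blast
qed

lemma AE_le_of_Linf_norm_diff_less:
  assumes "Linf_norm M (\<lambda>x. f x - c) < ereal \<epsilon>"
  shows "AE x in M. f x \<le> c + \<epsilon>"
  using esssup_AE[of "\<lambda>x. ereal \<bar>f x - c\<bar>" M]
proof eventually_elim
  case (elim x)
  then have "ereal \<bar>f x - c\<bar> < ereal \<epsilon>"
    using assms unfolding Linf_norm_def by (rule le_less_trans)
  then show ?case
    by (simp add: abs_less_iff)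
qed

lemma measure_Int_le_of_real_cond_exp_le:
  assumes "finite_measure M" "subalgebra M F" "A \<in> sets M" "B \<in> sets F"
    and le: "AE x in M. real_cond_exp M F (indicator A) x \<le> q"
  shows "measure M (A \<inter> B) \<le> q * measure M B"
proof -
  interpret finite_measure_subalgebra M F
    using assms(1,2) by (intro finite_measure_subalgebra.intro finite_measure_subalgebra_axioms.intro)
  have B: "B \<in> sets M"
    using assms(2,4) by (auto simp: subalgebra_def)
  have int_A: "integrable M (indicator A :: _ \<Rightarrow> real)"
    using assms(3) by (simp add: less_top[symmetric])
  have "measure M (A \<inter> B) = (\<integral>x\<in>B. indicator A x \<partial>M)"
    using assms(3) B by (simp add: set_lebesgue_integral_def indicator_inter_arith[symmetric] Int_commute)
  also have "\<dots> = (\<integral>x\<in>B. real_cond_exp M F (indicator A) x \<partial>M)"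
    using int_A assms(4) by (rule real_cond_exp_intA)
  also have "\<dots> \<le> (\<integral>x\<in>B. q \<partial>M)"
  proof (rule set_integral_mono_AE)
    show "set_integrable M B (real_cond_exp M F (indicator A))"
      using integrable_mult_indicator[OF B real_cond_exp_int(1)[OF int_A]]
      by (simp add: set_integrable_def)
    show "set_integrable M B (\<lambda>_. q)"
      using B by (simp add: set_integrable_def less_top[symmetric])
    show "AE x\<in>B in M. real_cond_exp M F (indicator A) x \<le> q"
      using le by (rule eventually_mono) simp
  qed
  also have "\<dots> = q * measure M B"
    using B by (simp add: set_lebesgue_integral_def Int_absorb2 sets.sets_into_space)
  finally show ?thesis .
qed

lemma powr_le_exp:
  fixes a y :: real
  assumes "0 \<le> y" "0 < a"
  shows "(y / a) powr a \<le> exp y"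
proof -
  have "y / a \<le> exp (y / a)"
    using exp_ge_add_one_self[of "y / a"] by linarith
  then have "(y / a) powr a \<le> exp (y / a) powr a"
    using assms by (intro powr_mono2) auto
  also have "\<dots> = exp y"
    using assms by (simp add: exp_powr_real)
  finally show ?thesis .
qed

lemma exp_neg_power_le_powr:
  fixes C \<alpha> :: real
  assumes "0 < C" "0 < \<alpha>" "1 \<le> d"
  shows "\<exists>\<kappa>>0. \<forall>l\<ge>1. exp (- C * l ^ d) \<le> \<kappa> * l powr (- \<alpha>)"
proof (intro exI conjI allI impI)
  define \<kappa> where "\<kappa> = (\<alpha> / C) powr \<alpha>"
  show "0 < \<kappa>"
    using assms by (simp add: \<kappa>_def)
  fix l :: real assume "1 \<le> l"
  have "l powr \<alpha> = \<kappa> * (C * l / \<alpha>) powr \<alpha>"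
    using assms \<open>1 \<le> l\<close> by (simp add: \<kappa>_def powr_mult[symmetric])
  also have "\<dots> \<le> \<kappa> * exp (C * l)"
    using assms \<open>1 \<le> l\<close> by (intro mult_left_mono powr_le_exp) (auto simp: \<kappa>_def)
  also have "\<dots> \<le> \<kappa> * exp (C * l ^ d)"
    using assms \<open>1 \<le> l\<close> by (intro mult_left_mono) (auto simp: \<kappa>_def self_le_power)
  finally have "l powr \<alpha> \<le> \<kappa> * exp (C * l ^ d)" .
  then show "exp (- C * l ^ d) \<le> \<kappa> * l powr (- \<alpha>)"
    using \<open>1 \<le> l\<close> by (simp add: powr_minus exp_minus field_simps)
qed

section \<open>Stationary configurations\<close>

locale stationary_config = prob_space PP for PP :: "(real^'d) set measure" +
  assumes sets_PP: "sets PP = sets Nsp"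
    and distr_shift_config: "\<And>x. distr PP Nsp (shift_config x) = PP"
begin

lemma space_PP: "space PP = space Nsp"
  using sets_PP by (rule sets_eq_imp_space_eq)

lemma subalgebra_Tail: "subalgebra PP (Tail a)"
  using subalgebra_Nsp_Tail[of a] by (simp add: subalgebra_def sets_PP space_PP)

lemma measure_vimage_shift_config:
  assumes "A \<in> sets Nsp"
  shows "measure PP (shift_config x -` A \<inter> space Nsp) = measure PP A"
proof -
  have "shift_config x \<in> PP \<rightarrow>\<^sub>M Nsp"
    using measurable_shift_config by (simp add: measurable_cong_sets[OF sets_PP refl])
  then have "measure (distr PP Nsp (shift_config x)) A = measure PP (shift_config x -` A \<inter> space Nsp)"
    using assms by (simp add: measure_distr space_PP)
  then show ?thesis
    by (simp add: distr_shift_config)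
qed

lemma measure_void_event_translation:
  assumes "finite T"
  shows "measure PP (void_event ((\<lambda>z. z + y) ` T)) = measure PP (void_event T)"
  using measure_vimage_shift_config[OF void_event_in_sets_Nsp[OF assms], of y]
  by (simp add: vimage_shift_config_void_event)

lemma measure_void_event_origin_less_1:
  assumes "0 < (\<integral>\<^sup>+ \<xi>. cnt \<xi> unit_cube \<partial>PP)"
  shows "measure PP (void_event {0}) < 1"
proof (rule ccontr)
  define h :: "real^'d" where "h = (\<chi> i. 1/2)"
  assume "\<not> measure PP (void_event {0}) < 1"
  then have "measure PP (void_event {0}) = 1"
    using prob_le_1[of "void_event {0}"] by linarith
  then have "measure PP (void_event {h}) = 1"
    using measure_void_event_translation[of "{0}" h] by simp
  then have "AE \<xi> in PP. \<xi> \<in> void_event {h}"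
    by (rule AE_prob_1)
  then have "AE \<xi> in PP. cnt \<xi> unit_cube = 0"
    by eventually_elim (simp add: void_event_singleton unit_cube_eq_cube_at h_def)
  then have "(\<integral>\<^sup>+ \<xi>. cnt \<xi> unit_cube \<partial>PP) = (\<integral>\<^sup>+ \<xi>. 0 \<partial>PP)"
    by (metis (mono_tags, lifting) nn_integral_cong_AE eventually_mono ennreal_of_enat_0)
  then show False
    using assms by simp
qed

lemma measure_void_event_le_power:
  assumes "0 \<le> q"
    and tail_bound: "\<And>B. B \<in> sets (Tail k) \<Longrightarrow> measure PP (void_event {0} \<inter> B) \<le> q * measure PP B"
    and "finite S" and "sup_separated (k + 1) S"
  shows "measure PP (void_event S) \<le> q ^ card S"
  using assms(3,4)
proof (induction S rule: finite_induct)
  case empty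
  then show ?case
    by simp
next
  case (insert y S)
  define T where "T = (\<lambda>z. z - y) ` S"
  have "finite T"
    using insert.hyps(1) by (simp add: T_def)
  have S_eq: "(\<lambda>z. z + y) ` T = S"
    by (force simp: T_def image_iff)
  \<comment> \<open>After the translation by \<open>- y\<close> the cubes around \<open>T\<close> avoid \<open>cube k\<close>, so
    \<open>void_event T\<close> is a tail event.\<close>
  have far: "\<exists>i. k + 1 \<le> \<bar>t $ i\<bar>" if "t \<in> T" for t
  proof -
    obtain y' where "y' \<in> S" "t = y' - y"
      using \<open>t \<in> T\<close> by (auto simp: T_def)
    moreover have "y' \<noteq> y"
      using insert.hyps(2) \<open>y' \<in> S\<close> by auto
    ultimately show ?thesis
      using insert.prems by (auto simp: sup_separated_def)
  qed
  have "measure PP (void_event (insert y S)) = measure PP (void_event {0} \<inter> void_event T)"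
    using measure_void_event_translation[of "insert 0 T" y] \<open>finite T\<close> S_eq
    by (simp add: void_event_insert[of 0 T])
  also have "\<dots> \<le> q * measure PP (void_event T)"
    by (rule tail_bound[OF void_event_in_sets_Tail[OF \<open>finite T\<close> far]])
  also have "measure PP (void_event T) = measure PP (void_event S)"
    using measure_void_event_translation[OF \<open>finite T\<close>, of y] S_eq by simp
  also have "q * \<dots> \<le> q * q ^ card S"
    using insert.IH sup_separated_subset[OF insert.prems] assms(1)
    by (intro mult_left_mono) auto
  finally show ?case
    using insert.hyps by simp
qed

lemma void_cube_exponential_bound:
  assumes "0 < q" "q < 1" "0 \<le> k"
    and tail_bound: "\<And>B. B \<in> sets (Tail k) \<Longrightarrow> measure PP (void_event {0} \<inter> B) \<le> q * measure PP B"
  shows "\<exists>C>0. \<forall>l\<ge>1. measure PP {\<xi> \<in> space Nsp. cnt \<xi> (cube l) = 0} \<le> exp (- C * l ^ CARD('d))"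
proof (intro exI conjI allI impI)
  define C where "C = - ln q / (2 * (k + 1)) ^ CARD('d)"
  have "ln q < 0" "0 < (2 * (k + 1)) ^ CARD('d)"
    using assms by simp_all
  then show "0 < C"
    unfolding C_def by (simp add: divide_neg_pos)
  fix l :: real assume "1 \<le> l"
  obtain S :: "(real^'d) set" where "finite S" "sup_separated (k + 1) S"
    and in_cube: "\<forall>y\<in>S. cube_at y (1/2) \<subseteq> cube l"
    and card_S: "(l / (2 * (k + 1))) ^ CARD('d) \<le> real (card S)"
    using exists_separated_points_in_cube[OF \<open>1 \<le> l\<close>, of "k + 1"] assms(3) by auto
  have "{\<xi> \<in> space Nsp. cnt \<xi> (cube l) = 0} \<subseteq> void_event S"
    using in_cube by (auto simp: void_event_def space_Nsp cnt_eq_0_iff)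
  then have "measure PP {\<xi> \<in> space Nsp. cnt \<xi> (cube l) = 0} \<le> measure PP (void_event S)"
    using void_event_in_sets_Nsp[OF \<open>finite S\<close>] by (intro finite_measure_mono) (auto simp: sets_PP)
  also have "\<dots> \<le> q ^ card S"
    using measure_void_event_le_power[OF _ tail_bound \<open>finite S\<close> \<open>sup_separated (k + 1) S\<close>] assms(1)
    by simp
  also have "\<dots> = exp (real (card S) * ln q)"
    using assms(1) by (simp add: exp_of_nat_mult)
  also have "\<dots> \<le> exp ((l / (2 * (k + 1))) ^ CARD('d) * ln q)"
    using card_S assms(1,2) by (intro exp_mono mult_right_mono_neg) auto
  also have "(l / (2 * (k + 1))) ^ CARD('d) * ln q = - C * l ^ CARD('d)"
    using assms(3) by (simp add: C_def field_simps)
  finally show "measure PP {\<xi> \<in> space Nsp. cnt \<xi> (cube l) = 0} \<le> exp (- C * l ^ CARD('d))" .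
qed

lemma conditional_void_bound_of_mixing:
  assumes mix: "((\<lambda>k. Linf_norm PP (\<lambda>\<xi>. real_cond_exp PP (Tail k) (indicator (void_event {0})) \<xi>
      - measure PP (void_event {0}))) \<longlongrightarrow> 0) at_top"
    and "measure PP (void_event {0}) < 1"
  obtains k q where "0 \<le> k" "0 < q" "q < 1"
    "\<And>B. B \<in> sets (Tail k) \<Longrightarrow> measure PP (void_event {0} \<inter> B) \<le> q * measure PP B"
proof -
  define p where "p = measure PP (void_event {0})"
  have "p < 1" "0 \<le> p"
    using assms(2) by (simp_all add: p_def)
  have "\<forall>\<^sub>F k in at_top. 0 \<le> k \<and> Linf_norm PP (\<lambda>\<xi>.
      real_cond_exp PP (Tail k) (indicator (void_event {0})) \<xi> - p) < ereal ((1 - p) / 2)"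
    using order_tendstoD(2)[OF mix] \<open>p < 1\<close>
    by (intro eventually_conj eventually_ge_at_top) (simp_all add: p_def)
  then obtain k :: real where "0 \<le> k" and mixed: "Linf_norm PP (\<lambda>\<xi>.
      real_cond_exp PP (Tail k) (indicator (void_event {0})) \<xi> - p) < ereal ((1 - p) / 2)"
    using eventually_happens'[OF trivial_limit_at_top_linorder] by blast
  have cond_exp_le:
    "AE \<xi> in PP. real_cond_exp PP (Tail k) (indicator (void_event {0})) \<xi> \<le> (1 + p) / 2"
    using AE_le_of_Linf_norm_diff_less[OF mixed] by eventually_elim argo
  have "void_event {0} \<in> sets PP"
    by (simp add: sets_PP void_event_in_sets_Nsp)
  note tail_bound = measure_Int_le_of_real_cond_exp_le[OF finite_measure_axioms subalgebra_Tail
      this _ cond_exp_le]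
  show thesis
    by (rule that[OF \<open>0 \<le> k\<close> _ _ tail_bound]) (use \<open>p < 1\<close> \<open>0 \<le> p\<close> in auto)
qed

lemma void_cube_exponential_decay:
  assumes "0 < (\<integral>\<^sup>+ \<xi>. cnt \<xi> unit_cube \<partial>PP)"
    and "((\<lambda>k. Linf_norm PP (\<lambda>\<xi>. real_cond_exp PP (Tail k) (indicator (void_event {0})) \<xi>
      - measure PP (void_event {0}))) \<longlongrightarrow> 0) at_top"
  shows "\<exists>C>0. \<forall>l\<ge>1. measure PP {\<xi> \<in> space Nsp. cnt \<xi> (cube l) = 0} \<le> exp (- C * l ^ CARD('d))"
proof (rule conditional_void_bound_of_mixing[OF assms(2) measure_void_event_origin_less_1[OF assms(1)]])
  fix k q :: real
  assume "0 \<le> k" "0 < q" "q < 1"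
    and "\<And>B. B \<in> sets (Tail k) \<Longrightarrow> measure PP (void_event {0} \<inter> B) \<le> q * measure PP B"
  then show ?thesis
    by (intro void_cube_exponential_bound)
qed

end

lemma stationary_config_distr:
  assumes "prob_space P" and pp: "pp \<in> P \<rightarrow>\<^sub>M Nsp"
    and \<theta>: "\<And>x. \<theta> x \<in> P \<rightarrow>\<^sub>M P" "\<And>x. distr P P (\<theta> x) = P"
    and covariant: "\<And>x. AE \<omega> in P. pp (\<theta> x \<omega>) = shift_config x (pp \<omega>)"
  shows "stationary_config (distr P Nsp pp)"
proof -
  have "distr (distr P Nsp pp) Nsp (shift_config x) = distr P Nsp pp" for x
  proof -
    have "distr (distr P Nsp pp) Nsp (shift_config x) = distr P Nsp (shift_config x \<circ> pp)"
      by (rule distr_distr[OF measurable_shift_config pp])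
    also have "\<dots> = distr P Nsp (pp \<circ> \<theta> x)"
    proof -
      have "AE \<omega> in P. (shift_config x \<circ> pp) \<omega> = (pp \<circ> \<theta> x) \<omega>"
        using covariant[of x] by eventually_elim simp
      then show ?thesis
        by (rule distr_cong_AE[OF refl refl _ measurable_comp[OF pp measurable_shift_config]
              measurable_comp[OF \<theta>(1) pp]])
    qed
    also have "\<dots> = distr (distr P P (\<theta> x)) Nsp pp"
      by (rule distr_distr[OF pp \<theta>(1), symmetric])
    finally show ?thesis
      by (simp add: \<theta>(2))
  qed
  then show ?thesis
    by (intro stationary_config.intro stationary_config_axioms.intro
        prob_space.prob_space_distr[OF assms(1) pp]) simp_all
qed

theorem proposition4p7:
  fixes P :: "'w measure"
    and \<theta> :: "real^'d \<Rightarrow> 'w \<Rightarrow> 'w"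
    and pp :: "'w \<Rightarrow> (real^'d) set"
    and c :: "'w \<Rightarrow> real^'d \<Rightarrow> real^'d \<Rightarrow> real"
  defines "PP \<equiv> distr P Nsp pp"
  assumes prob: "prob_space P"
    and act_meas: "(\<lambda>(x, \<omega>). \<theta> x \<omega>) \<in> measurable (borel \<Otimes>\<^sub>M P) P"
    and act_0: "\<And>\<omega>. \<theta> 0 \<omega> = \<omega>"
    and act_add: "\<And>x y \<omega>. \<theta> (x + y) \<omega> = \<theta> x (\<theta> y \<omega>)"
    and pp_meas: "pp \<in> measurable P Nsp"
    and c_meas: "\<And>x y. (\<lambda>\<omega>. c \<omega> x y) \<in> borel_measurable P"
    and c_sym: "\<And>\<omega> x y. c \<omega> x y = c \<omega> y x"
    and c_nonneg: "\<And>\<omega> x y. c \<omega> x y \<ge> 0"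
    and c_DT: "\<And>\<omega> x y. \<omega> \<in> space P \<Longrightarrow> \<not> DT_edge (pp \<omega>) x y \<Longrightarrow> c \<omega> x y = 0"
    \<comment> \<open>(A1)\<close>
    and A1_inv: "\<And>x. distr P P (\<theta> x) = P"
    and A1_nonempty: "measure P {\<omega> \<in> space P. pp \<omega> = {}} = 0"
    \<comment> \<open>(A2)\<close>
    and A2: "0 < (\<integral>\<^sup>+ \<xi>. cnt \<xi> unit_cube \<partial>PP)" "(\<integral>\<^sup>+ \<xi>. cnt \<xi> unit_cube \<partial>PP) < \<infinity>"
    \<comment> \<open>(A3)\<close>
    and A3: "\<exists>W \<in> sets P. measure P W = 1 \<and> (\<forall>x. \<theta> x -` W \<inter> space P = W) \<and>
       (\<forall>\<omega>\<in>W. \<forall>x. pp (\<theta> x \<omega>) = (\<lambda>z. z - x) ` pp \<omega> \<and>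
          (\<forall>y z. DT_edge (pp \<omega>) y z \<longrightarrow> c (\<theta> x \<omega>) (y - x) (z - x) = c \<omega> y z))"
    \<comment> \<open>mixing hypothesis\<close>
    and mix: "((\<lambda>k. Linf_norm PP (\<lambda>\<xi>.
                 real_cond_exp PP (Tail k) (indicator {\<xi> \<in> space Nsp. cnt \<xi> (cube (1/2)) = 0}) \<xi>
                 - measure PP {\<xi> \<in> space Nsp. cnt \<xi> (cube (1/2)) = 0}))
              \<longlongrightarrow> 0) at_top"
  shows "(\<exists>C>0. \<forall>l\<ge>1. measure PP {\<xi> \<in> space Nsp. cnt \<xi> (cube l) = 0}
                          \<le> exp (- C * l ^ CARD('d)))
       \<and> (\<forall>\<alpha>>0. \<exists>\<kappa>>0. \<forall>l\<ge>1. measure PP {\<xi> \<in> space Nsp. cnt \<xi> (cube l) = 0}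
                          \<le> \<kappa> * l powr (- \<alpha>))"
proof -
  obtain W where W: "W \<in> sets P" "measure P W = 1"
    "\<And>\<omega> x. \<omega> \<in> W \<Longrightarrow> pp (\<theta> x \<omega>) = (\<lambda>z. z - x) ` pp \<omega>"
    using A3 by (elim bexE conjE) auto
  have covariant: "AE \<omega> in P. pp (\<theta> x \<omega>) = shift_config x (pp \<omega>)" for x
    using prob_space.AE_prob_1[OF prob W(2)] by eventually_elim (simp add: W(3) shift_config_def)
  have "\<theta> x \<in> P \<rightarrow>\<^sub>M P" for x
    using measurable_compose[OF measurable_Pair1' act_meas] by simp
  then interpret stationary_config PP
    unfolding PP_def using prob pp_meas A1_inv covariant by (intro stationary_config_distr)
  have "{\<xi> \<in> space Nsp. cnt \<xi> (cube (1/2)) = 0} = void_event {0}"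
    by (auto simp: void_event_def space_Nsp cube_eq_cube_at cnt_eq_0_iff)
  from mix[unfolded this] obtain C where "0 < C"
    and exp_bound: "\<forall>l\<ge>1. measure PP {\<xi> \<in> space Nsp. cnt \<xi> (cube l) = 0} \<le> exp (- C * l ^ CARD('d))"
    using void_cube_exponential_decay[OF A2(1)] by blast
  have "\<exists>\<kappa>>0. \<forall>l\<ge>1. measure PP {\<xi> \<in> space Nsp. cnt \<xi> (cube l) = 0} \<le> \<kappa> * l powr (- \<alpha>)"
    if "0 < \<alpha>" for \<alpha>
  proof -
    obtain \<kappa> where "0 < \<kappa>" and "\<And>l. 1 \<le> l \<Longrightarrow> exp (- C * l ^ CARD('d)) \<le> \<kappa> * l powr (- \<alpha>)"
      using exp_neg_power_le_powr[OF \<open>0 < C\<close> \<open>0 < \<alpha>\<close>, of "CARD('d)"] by auto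
    then show ?thesis
      using exp_bound order_trans by blast
  qed
  then show ?thesis
    using \<open>0 < C\<close> exp_bound by blast
qed

end
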